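(* Let $n \ge 2$ be an integer, $M$ a real $n\times n$ matrix, $\alpha := \frac1n s(M)$, $\beta := \frac1n q(M)$, and $\kappa := \frac{n\beta - \alpha^2}{n-1}$. Then: if $\alpha^2 < \beta$: $|\det M| \le \beta^{n/2}$; if $\alpha^2 = \beta$: $|\det M| \le |\alpha|\kappa^{\frac{n-1}{2}} = \beta^{n/2}$; if $\alpha^2 > \beta$: $|\det M| \le |\alpha|\kappa^{\frac{n-1}{2}} < \beta^{n/2}$.
   Context: For a real matrix $M$, $s(M)$ denotes the sum of all entries of $M$ and $q(M)$ the sum of the squares of all entries of $M$. *)

theory Defs
  imports "HOL-Analysis.Analysis"
begin

definition msum :: "real^'n^'m \<Rightarrow> real" where
  "msum M = (\<Sum>i\<in>UNIV. \<Sum>j\<in>UNIV. M $ i $ j)"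

definition msq :: "real^'n^'m \<Rightarrow> real" where
  "msq M = (\<Sum>i\<in>UNIV. \<Sum>j\<in>UNIV. (M $ i $ j)^2)"

end

theory Submission
  imports Defs
begin

text \<open>
  Hadamard's inequality and AM-GM on the squared row norms give \<open>(det M)\<^sup>2 \<le> \<beta> ^ n\<close>.
  For the refined bound, multiply \<open>M\<close> by an orthogonal matrix whose \<open>k\<close>-th column is the
  normalised all-ones vector \<open>e\<close>. This keeps \<open>\<bar>det M\<bar>\<close> and the Frobenius norm
  \<open>q = n \<beta>\<close>, and makes one column equal to \<open>M e\<close>, whose squared norm \<open>t\<close> satisfies
  \<open>\<alpha>\<^sup>2 \<le> t \<le> q\<close> because \<open>e \<bullet> M e = \<alpha>\<close>. Hadamard and AM-GM on the other columns give
  \<open>(det M)\<^sup>2 \<le> t ((q - t) / (n - 1)) ^ (n - 1)\<close>, which decreases in \<open>t\<close> once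
  \<open>t \<ge> q / n = \<beta>\<close>; hence \<open>\<alpha>\<^sup>2 \<ge> \<beta>\<close> yields \<open>(det M)\<^sup>2 \<le> \<alpha>\<^sup>2 \<kappa> ^ (n - 1)\<close>.
  Finally \<open>\<beta> = (\<alpha>\<^sup>2 + (n - 1) \<kappa>) / n\<close>, so \<open>\<alpha>\<^sup>2 \<kappa> ^ (n - 1) \<le> \<beta> ^ n\<close> is weighted AM-GM,
  strict unless \<open>\<alpha>\<^sup>2 = \<kappa>\<close>, i.e. unless \<open>\<alpha>\<^sup>2 = \<beta>\<close>.
\<close>

lemma prod_le_mean_power:
  fixes x :: "'a \<Rightarrow> real"
  assumes "finite S" and nonneg: "\<And>i. i \<in> S \<Longrightarrow> x i \<ge> 0"
  shows "(\<Prod>i\<in>S. x i) \<le> ((\<Sum>i\<in>S. x i) / card S) ^ card S"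
proof (cases "S = {}")
  case False
  have card_pos: "card S > 0"
    using False assms(1) by (simp add: card_gt_0_iff)
  have root_power: "p = (p powr (1 / card S)) ^ card S" if "p \<ge> 0" for p :: real
  proof (cases "p = 0")
    case False
    then have "(p powr (1 / card S)) ^ card S = (p powr (1 / card S)) powr card S"
      using that by (simp add: powr_realpow)
    also have "\<dots> = p"
      using card_pos that by (simp add: powr_powr)
    finally show ?thesis ..
  qed (use card_pos in simp)
  have "(\<Prod>i\<in>S. x i) = ((\<Prod>i\<in>S. x i) powr (1 / card S)) ^ card S"
    using nonneg by (intro root_power prod_nonneg) auto
  also have "\<dots> \<le> (\<Sum>i\<in>S. x i / card S) ^ card S"
    by (intro power_mono arith_geom_mean[OF assms(1) False] nonneg) simp_all
  finally show ?thesis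
    unfolding sum_divide_distrib .
qed simp

lemma strict_Bernoulli_inequality:
  fixes x :: real
  assumes "x > -1" "x \<noteq> 0" "n \<ge> 2"
  shows "1 + real n * x < (1 + x) ^ n"
proof -
  obtain k where n: "n = Suc k" and k: "k \<ge> 1"
    using assms(3) by (cases n) auto
  have "1 + real n * x < 1 + real n * x + real k * x\<^sup>2"
    using assms k by simp
  also have "\<dots> = (1 + x) * (1 + real k * x)"
    by (simp add: n algebra_simps power2_eq_square)
  also have "\<dots> \<le> (1 + x) ^ n"
    using Bernoulli_inequality[of x k] assms(1) by (simp add: n)
  finally show ?thesis .
qed

lemma mult_power_rest_antimono:
  fixes a t q :: real
  assumes "m \<ge> 1" "0 \<le> a" "a \<le> t" "t \<le> q" "q \<le> (m + 1) * a"
  shows "t * ((q - t) / m) ^ m \<le> a * ((q - a) / m) ^ m"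
proof (cases "q = a")
  case True
  then show ?thesis
    using assms by simp
next
  case False
  define k where "k = (q - a) / m"
  define u where "u = (t - a) / (m * k)"
  have m: "real m > 0"
    using assms(1) by simp
  have k: "0 < k" "k \<le> a"
    using assms False m by (simp_all add: k_def field_simps)
  have u: "0 \<le> u" "u \<le> 1"
    using assms m k by (simp_all add: u_def k_def field_simps)
  have qt: "(q - t) / m = k * (1 - u)"
    using m k by (simp add: u_def k_def field_simps)
  have "t = a + m * k * u"
    using m k by (simp add: u_def)
  also have "\<dots> \<le> a * (1 + m * u)"
    using k u m by (simp add: algebra_simps mult_right_mono)
  finally have t: "t \<le> a * (1 + m * u)" .
  have "(1 + m * u) * (1 - u) ^ m \<le> (1 + u) ^ m * (1 - u) ^ m"
    using Bernoulli_inequality[of u m] u by (intro mult_right_mono) auto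
  also have "\<dots> = (1 - u\<^sup>2) ^ m"
    by (simp add: power_mult_distrib[symmetric] power2_eq_square algebra_simps)
  also have "\<dots> \<le> 1"
    using u by (intro power_le_one) (auto simp: power_le_one)
  finally have Bernoulli: "(1 + m * u) * (1 - u) ^ m \<le> 1" .
  have "t * ((q - t) / m) ^ m = k ^ m * (t * (1 - u) ^ m)"
    by (simp add: qt power_mult_distrib)
  also have "\<dots> \<le> k ^ m * (a * (1 + m * u) * (1 - u) ^ m)"
    using t u k by (intro mult_left_mono mult_right_mono) auto
  also have "\<dots> \<le> k ^ m * a"
    using Bernoulli k assms(2) by (intro mult_left_mono) (simp_all add: mult.assoc mult_left_le)
  finally show ?thesis
    by (simp add: k_def mult.commute)
qed

lemma mult_power_less_mean_power:
  fixes a k :: real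
  assumes "0 \<le> a" "0 \<le> k" "a \<noteq> k" "m \<ge> 1"
  shows "a * k ^ m < ((a + m * k) / (m + 1)) ^ (m + 1)"
proof (cases "k = 0")
  case False
  then have k: "k > 0"
    using assms by simp
  define v where "v = (a - k) / ((m + 1) * k)"
  have denom: "(m + 1) * k > 0"
    using k by simp
  have "k * m > 0"
    using assms(4) k by simp
  then have "- ((m + 1) * k) < a - k"
    using assms(1) by (simp add: algebra_simps)
  then have v: "v > -1" "v \<noteq> 0"
    using assms k denom by (simp_all add: v_def less_divide_eq)
  have mean: "(a + m * k) / (real m + 1) = k * (1 + v)"
    using k denom by (simp add: v_def field_simps)
  have "a / k = 1 + real (m + 1) * v"
    using k denom by (simp add: v_def field_simps)
  also have "\<dots> < (1 + v) ^ (m + 1)"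
    using strict_Bernoulli_inequality[OF v, of "m + 1"] assms(4) by linarith
  finally have "a < k * (1 + v) ^ (m + 1)"
    using k by (simp add: divide_less_eq mult.commute)
  then have "a * k ^ m < k * (1 + v) ^ (m + 1) * k ^ m"
    using k by (intro mult_strict_right_mono) auto
  also have "\<dots> = ((a + m * k) / (real m + 1)) ^ (m + 1)"
    unfolding mean power_mult_distrib by (simp add: mult_ac)
  finally show ?thesis .
qed (use assms in \<open>simp add: zero_power\<close>)

lemma mult_power_rest_less_mean_power:
  fixes a q :: real
  assumes "m \<ge> 1" "0 \<le> a" "a \<le> q" "q \<noteq> (m + 1) * a"
  shows "a * ((q - a) / m) ^ m < (q / (m + 1)) ^ (m + 1)"
proof -
  define k where "k = (q - a) / m"
  have "a + m * k = q" "0 \<le> k" "a \<noteq> k"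
    using assms by (auto simp: k_def field_simps)
  then show ?thesis
    using mult_power_less_mean_power[of a k m] assms(1,2) by (simp add: k_def)
qed

lemma powr_half_eq_sqrt_power:
  fixes b :: real
  assumes "0 \<le> b" "N \<ge> 1"
  shows "b powr (real N / 2) = sqrt (b ^ N)"
proof (cases "b = 0")
  case False
  then have "sqrt (b ^ N) = (b powr real N) powr (1 / 2)"
    using assms by (simp add: powr_half_sqrt powr_realpow)
  then show ?thesis
    by (simp add: powr_powr)
qed (use assms in simp)

lemma power2_norm_vec: "(norm x)\<^sup>2 = (\<Sum>i\<in>UNIV. (norm (x $ i))\<^sup>2)"
  by (simp add: norm_vec_def L2_set_def sum_nonneg)

lemma msq_eq_power2_norm: "msq M = (norm M)\<^sup>2"
  by (simp add: msq_def power2_norm_vec)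

lemma norm_transpose: "norm (transpose A) = norm (A :: real^'n^'m)"
proof -
  have "(norm (transpose A))\<^sup>2 = (norm A)\<^sup>2"
    by (simp add: power2_norm_vec transpose_def sum.swap[where A = "UNIV :: 'n set"])
  then show ?thesis
    by simp
qed

lemma norm_matrix_vector_mult_le: "norm (A *v x) \<le> norm A * norm (x :: real^'n)"
proof -
  have "norm (A *v x) \<le> norm (\<chi> i. norm (A $ i) * norm x)"
  proof (rule norm_le_componentwise_cart)
    fix i
    have "(A *v x) $ i = A $ i \<bullet> x"
      by (simp add: matrix_vector_mult_def inner_vec_def)
    then show "norm ((A *v x) $ i) \<le> norm ((\<chi> i. norm (A $ i) * norm x) $ i)"
      by (simp add: Cauchy_Schwarz_ineq2)
  qed
  also have "\<dots> = norm A * norm x"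
  proof -
    have "(norm (\<chi> i. norm (A $ i) * norm x))\<^sup>2 = (norm A * norm x)\<^sup>2"
      by (simp add: power2_norm_vec power_mult_distrib sum_distrib_right)
    then show ?thesis
      by (simp add: power2_eq_iff_nonneg)
  qed
  finally show ?thesis .
qed

lemma norm_orthogonal_matrix_vector_mult:
  assumes "orthogonal_matrix Q"
  shows "norm (Q *v x) = norm (x :: real^'n)"
  using assms orthogonal_transformation_matrix[of "(*v) Q"] orthogonal_transformation_norm
  by simp

lemma norm_matrix_mult_orthogonal:
  fixes A :: "real^'n^'m"
  assumes "orthogonal_matrix Q"
  shows "norm (A ** Q) = norm A"
proof -
  have rows: "norm ((A ** Q) $ i) = norm (A $ i)" for i
  proof -
    have "(A ** Q) $ i = transpose Q *v A $ i"
      by (simp add: vec_eq_iff matrix_matrix_mult_def matrix_vector_mult_def transpose_def mult.commute)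
    then show ?thesis
      using assms norm_orthogonal_matrix_vector_mult[of "transpose Q" "A $ i"] by simp
  qed
  show ?thesis
    unfolding norm_vec_def[of "A ** Q"] norm_vec_def[of A] rows ..
qed

text \<open>Gram-Schmidt on the rows, using only row operations that add to a row a combination
  of the others, so that the determinant is unchanged.\<close>

lemma det_orthogonalize_rows:
  fixes A :: "real^'n^'n"
  assumes "finite S"
  shows "\<exists>B. det B = det A \<and> (\<forall>i. norm (B $ i) \<le> norm (A $ i))
     \<and> (\<forall>i\<in>S. \<forall>j\<in>S. i \<noteq> j \<longrightarrow> B $ i \<bullet> B $ j = 0) \<and> (\<forall>i. i \<notin> S \<longrightarrow> B $ i = A $ i)"
  using assms
proof (induction S rule: finite_induct)
  case (insert k S)
  then obtain B where det_B: "det B = det A" and norm_B: "\<forall>i. norm (B $ i) \<le> norm (A $ i)"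
    and orth_B: "\<forall>i\<in>S. \<forall>j\<in>S. i \<noteq> j \<longrightarrow> B $ i \<bullet> B $ j = 0"
    and outside_B: "\<forall>i. i \<notin> S \<longrightarrow> B $ i = A $ i"
    by blast
  let ?V = "span {B $ i | i. i \<in> S}"
  obtain y z where y: "y \<in> ?V" and z: "\<And>w. w \<in> ?V \<Longrightarrow> orthogonal z w" and yz: "B $ k = y + z"
    using orthogonal_subspace_decomp_exists by blast
  define B' where "B' = (\<chi> i. if i = k then row k B + - y else row i B)"
  have row_B: "row i B = B $ i" for i
    by (simp add: row_def vec_eq_iff)
  have B'_row: "B' $ i = (if i = k then z else B $ i)" for i
    by (simp add: B'_def row_B yz)
  have "{B $ i | i. i \<in> S} \<subseteq> {row j B | j. j \<noteq> k}"
    using insert(2) row_B by fastforce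
  then have "- y \<in> span {row j B | j. j \<noteq> k}"
    using span_mono y span_neg by blast
  then have "det B' = det B"
    unfolding B'_def using det_row_span[of "- y" B k] by (simp add: span_vec_eq)
  have "(norm (B $ k))\<^sup>2 = (norm y)\<^sup>2 + (norm z)\<^sup>2"
    using yz norm_add_Pythagorean[of y z] z[OF y] by (simp add: orthogonal_commute)
  then have "norm z \<le> norm (A $ k)"
    using outside_B insert(2) by (simp add: power2_le_imp_le)
  moreover have "z \<bullet> B $ j = 0" if "j \<in> S" for j
    using z[of "B $ j"] that span_base[of "B $ j" "{B $ i | i. i \<in> S}"] by (auto simp: orthogonal_def)
  ultimately show ?case
    using \<open>det B' = det B\<close> det_B norm_B orth_B outside_B insert(2)
    by (intro exI[of _ B']) (auto simp: B'_row inner_commute)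
qed auto

theorem Hadamard_inequality:
  fixes A :: "real^'n^'n"
  shows "\<bar>det A\<bar> \<le> (\<Prod>i\<in>UNIV. norm (A $ i))"
proof -
  obtain B where det_B: "det B = det A" and norm_B: "\<forall>i. norm (B $ i) \<le> norm (A $ i)"
    and orth_B: "\<forall>i j. i \<noteq> j \<longrightarrow> B $ i \<bullet> B $ j = 0"
    using det_orthogonalize_rows[of "UNIV :: 'n set" A] by auto
  have gram: "(B ** transpose B) $ i $ j = B $ i \<bullet> B $ j" for i j
    by (simp add: matrix_matrix_mult_def transpose_def inner_vec_def)
  have "det (B ** transpose B) = (\<Prod>i\<in>UNIV. B $ i \<bullet> B $ i)"
    by (rule det_diagonal[THEN trans]) (auto simp: gram orth_B)
  then have "(det B)\<^sup>2 = (\<Prod>i\<in>UNIV. norm (B $ i))\<^sup>2"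
    by (simp add: det_mul power2_eq_square dot_square_norm prod.distrib[symmetric])
  then have "\<bar>det B\<bar> = (\<Prod>i\<in>UNIV. norm (B $ i))"
    by (subst power2_eq_iff_nonneg[symmetric]) (simp_all add: prod_nonneg)
  also have "\<dots> \<le> (\<Prod>i\<in>UNIV. norm (A $ i))"
    using norm_B by (intro prod_mono) auto
  finally show ?thesis
    using det_B by simp
qed

lemma det_power2_le_prod_row_norms:
  fixes A :: "real^'n^'n"
  shows "(det A)\<^sup>2 \<le> (\<Prod>i\<in>UNIV. (norm (A $ i))\<^sup>2)"
  using power_mono[OF Hadamard_inequality[of A], of 2]
  by (simp add: prod_power_distrib)

lemma det_power2_le_mean_row_norm:
  fixes A :: "real^'n^'n"
  shows "(det A)\<^sup>2 \<le> ((norm A)\<^sup>2 / CARD('n)) ^ CARD('n)"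
  using det_power2_le_prod_row_norms[of A] prod_le_mean_power[of UNIV "\<lambda>i. (norm (A $ i))\<^sup>2"]
  by (simp add: power2_norm_vec[of A])

lemma det_power2_le_split_row:
  fixes A :: "real^'n^'n"
  shows "(det A)\<^sup>2 \<le> (norm (A $ k))\<^sup>2
           * (((norm A)\<^sup>2 - (norm (A $ k))\<^sup>2) / (CARD('n) - 1)) ^ (CARD('n) - 1)"
proof -
  have rest: "(\<Sum>i\<in>UNIV - {k}. (norm (A $ i))\<^sup>2) = (norm A)\<^sup>2 - (norm (A $ k))\<^sup>2"
    using sum.remove[of UNIV k "\<lambda>i. (norm (A $ i))\<^sup>2"] by (simp add: power2_norm_vec[of A])
  have "(det A)\<^sup>2 \<le> (norm (A $ k))\<^sup>2 * (\<Prod>i\<in>UNIV - {k}. (norm (A $ i))\<^sup>2)"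
    using det_power2_le_prod_row_norms[of A] prod.remove[of UNIV k "\<lambda>i. (norm (A $ i))\<^sup>2"] by simp
  also have "\<dots> \<le> (norm (A $ k))\<^sup>2 * (((norm A)\<^sup>2 - (norm (A $ k))\<^sup>2) / (CARD('n) - 1)) ^ (CARD('n) - 1)"
    using prod_le_mean_power[of "UNIV - {k}" "\<lambda>i. (norm (A $ i))\<^sup>2"]
    by (intro mult_left_mono) (simp_all add: rest card_Diff_singleton)
  finally show ?thesis .
qed

lemma det_power2_le_unit_vector:
  fixes M :: "real^'n^'n"
  assumes "norm e = 1"
  shows "(det M)\<^sup>2 \<le> (norm (M *v e))\<^sup>2
           * (((norm M)\<^sup>2 - (norm (M *v e))\<^sup>2) / (CARD('n) - 1)) ^ (CARD('n) - 1)"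
proof -
  fix k :: 'n
  obtain Q where Q: "orthogonal_matrix Q" and Qk: "Q *v axis k 1 = e"
    using orthogonal_matrix_exists_basis[OF assms] by blast
  define A where "A = transpose (M ** Q)"
  have "A $ k = column k (M ** Q)"
    by (simp add: A_def transpose_def column_def vec_eq_iff)
  also have "\<dots> = M *v e"
    by (simp add: matrix_vector_mult_basis[symmetric] matrix_vector_mul_assoc[symmetric] Qk)
  finally have "A $ k = M *v e" .
  moreover have "norm A = norm M"
    by (simp add: A_def norm_transpose norm_matrix_mult_orthogonal Q)
  moreover have "(det A)\<^sup>2 = (det M)\<^sup>2"
    using det_orthogonal_matrix[OF Q] by (auto simp: A_def det_transpose det_mul)
  ultimately show ?thesis
    using det_power2_le_split_row[of A k] by simp
qed

lemma unit_vector_mean_entry: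
  fixes M :: "real^'n^'n"
  obtains e :: "real^'n" where "norm e = 1" "e \<bullet> (M *v e) = msum M / CARD('n)"
proof
  let ?c = "1 / sqrt CARD('n)"
  have cc: "?c * ?c = 1 / CARD('n)"
    by simp
  have "(norm (\<chi> i. ?c :: real^'n))\<^sup>2 = 1"
    by (simp add: power2_norm_vec power_divide)
  then show "norm (\<chi> i. ?c :: real^'n) = 1"
    using power2_eq_iff_nonneg[of "norm (\<chi> i. ?c :: real^'n)" 1] by simp
  have "(\<chi> i. ?c) \<bullet> (M *v (\<chi> i. ?c)) = ?c * ?c * msum M"
    by (simp add: inner_vec_def matrix_vector_mult_def msum_def sum_distrib_left mult_ac)
  then show "(\<chi> i. ?c) \<bullet> (M *v (\<chi> i. ?c)) = msum M / CARD('n)"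
    by (simp only: cc) simp
qed

lemma mean_entry_le_unit_image:
  fixes M :: "real^'n^'n"
  obtains e where "norm e = 1" "(msum M / CARD('n))\<^sup>2 \<le> (norm (M *v e))\<^sup>2"
    "(norm (M *v e))\<^sup>2 \<le> msq M"
proof -
  obtain e :: "real^'n" where e: "norm e = 1" "e \<bullet> (M *v e) = msum M / CARD('n)"
    using unit_vector_mean_entry by blast
  have "\<bar>msum M / CARD('n)\<bar> \<le> norm (M *v e)"
    using Cauchy_Schwarz_ineq2[of e "M *v e"] e by simp
  then have "(msum M / CARD('n))\<^sup>2 \<le> (norm (M *v e))\<^sup>2"
    by (simp add: abs_le_square_iff[symmetric])
  moreover have "norm (M *v e) \<le> norm M"
    using norm_matrix_vector_mult_le[of M e] e by simp
  then have "(norm (M *v e))\<^sup>2 \<le> msq M"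
    by (simp add: msq_eq_power2_norm power_mono)
  ultimately show ?thesis
    using that[OF e(1)] by blast
qed

lemma det_power2_le_mean_entry:
  fixes M :: "real^'n^'n" and a :: real
  defines "a \<equiv> msum M / CARD('n)"
  assumes "CARD('n) \<ge> 2" "msq M \<le> CARD('n) * a\<^sup>2"
  shows "(det M)\<^sup>2 \<le> a\<^sup>2 * ((msq M - a\<^sup>2) / (CARD('n) - 1)) ^ (CARD('n) - 1)"
proof -
  obtain e where e: "norm e = 1" and lower: "a\<^sup>2 \<le> (norm (M *v e))\<^sup>2"
    and upper: "(norm (M *v e))\<^sup>2 \<le> msq M"
    using mean_entry_le_unit_image unfolding a_def by blast
  have "(det M)\<^sup>2 \<le> (norm (M *v e))\<^sup>2
          * ((msq M - (norm (M *v e))\<^sup>2) / (CARD('n) - 1)) ^ (CARD('n) - 1)"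
    using det_power2_le_unit_vector[OF e] by (simp add: msq_eq_power2_norm)
  also have "\<dots> \<le> a\<^sup>2 * ((msq M - a\<^sup>2) / (CARD('n) - 1)) ^ (CARD('n) - 1)"
    using assms(2,3) lower upper by (intro mult_power_rest_antimono) auto
  finally show ?thesis .
qed

theorem mainTheorem5:
  fixes M :: "real^'n^'n"
  assumes "CARD('n) \<ge> 2"
  defines "n \<equiv> real CARD('n)"
  defines "\<alpha> \<equiv> msum M / n"
  defines "\<beta> \<equiv> msq M / n"
  defines "\<kappa> \<equiv> (n * \<beta> - \<alpha>^2) / (n - 1)"
  shows "(\<alpha>^2 < \<beta> \<longrightarrow> \<bar>det M\<bar> \<le> \<beta> powr (n / 2))
       \<and> (\<alpha>^2 = \<beta> \<longrightarrow> \<bar>det M\<bar> \<le> \<bar>\<alpha>\<bar> * \<kappa> powr ((n - 1) / 2)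
                         \<and> \<bar>\<alpha>\<bar> * \<kappa> powr ((n - 1) / 2) = \<beta> powr (n / 2))
       \<and> (\<alpha>^2 > \<beta> \<longrightarrow> \<bar>det M\<bar> \<le> \<bar>\<alpha>\<bar> * \<kappa> powr ((n - 1) / 2)
                         \<and> \<bar>\<alpha>\<bar> * \<kappa> powr ((n - 1) / 2) < \<beta> powr (n / 2))"
proof -
  define m where "m = CARD('n) - 1"
  have m: "m \<ge> 1" "CARD('n) = m + 1" "n = real m + 1"
    using assms(1) by (auto simp: m_def n_def)
  then have "n > 0"
    by simp
  then have q: "msq M = n * \<beta>" "\<beta> \<ge> 0"
    by (simp_all add: \<beta>_def msq_eq_power2_norm)
  obtain e where "\<alpha>\<^sup>2 \<le> (norm (M *v e))\<^sup>2" "(norm (M *v e))\<^sup>2 \<le> msq M"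
    using mean_entry_le_unit_image[of M] unfolding \<alpha>_def n_def by blast
  then have \<alpha>: "\<alpha>\<^sup>2 \<le> msq M" and \<kappa>: "\<kappa> = (msq M - \<alpha>\<^sup>2) / m" "\<kappa> \<ge> 0"
    using m by (simp_all add: \<kappa>_def q)
  have powr: "\<beta> powr (n / 2) = sqrt (\<beta> ^ (m + 1))"
    "\<bar>\<alpha>\<bar> * \<kappa> powr ((n - 1) / 2) = sqrt (\<alpha>\<^sup>2 * \<kappa> ^ m)"
    using powr_half_eq_sqrt_power[of _ "m + 1"] powr_half_eq_sqrt_power[of \<kappa> m] q \<kappa> m
    by (simp_all add: n_def real_sqrt_mult)
  have "(det M)\<^sup>2 \<le> \<beta> ^ (m + 1)"
    using det_power2_le_mean_row_norm[of M] m by (simp add: \<beta>_def n_def msq_eq_power2_norm)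
  moreover have "(det M)\<^sup>2 \<le> \<alpha>\<^sup>2 * \<kappa> ^ m" if "\<beta> \<le> \<alpha>\<^sup>2"
    using det_power2_le_mean_entry[of M] assms(1) that m q \<kappa> by (simp add: \<alpha>_def n_def)
  moreover have "\<alpha>\<^sup>2 * \<kappa> ^ m = \<beta> ^ (m + 1)" if "\<alpha>\<^sup>2 = \<beta>"
    using that m q by (simp add: \<kappa> field_simps)
  moreover have "\<alpha>\<^sup>2 * \<kappa> ^ m < \<beta> ^ (m + 1)" if "\<beta> < \<alpha>\<^sup>2"
  proof -
    have "msq M \<noteq> (real m + 1) * \<alpha>\<^sup>2"
      using that \<open>n > 0\<close> m(3) q by simp
    then show ?thesis
      using mult_power_rest_less_mean_power[of m "\<alpha>\<^sup>2" "msq M"] m q \<alpha> by (simp add: \<kappa>)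
  qed
  ultimately show ?thesis
    unfolding powr by (auto simp: real_le_rsqrt)
qed

end
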